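(* Let $s=e^{2\pi i\theta}$ with $\theta$ irrational, let $\varepsilon>0$ and let $m$ be a positive integer. Then there exists $\delta>0$ such that for every $a$ with $|a|<1$ and $|s-a|<\delta$ we have $|Q_a^i(c_a)|>1-\varepsilon$ for all $i=0,1,\dots,m$.
   Context: For $|a|<1$, $Q_a(z)=z\frac{a-z}{1-\overline a z}$, and $c_a=\frac{a}{1+\sqrt{1-|a|^2}}$ is the unique critical point of $Q_a$ in the open unit disk. $Q_a^i$ denotes the $i$-th iterate. *)

theory Defs
  imports "HOL-Analysis.Analysis"
begin

definition Qmap :: "complex \<Rightarrow> complex \<Rightarrow> complex" where
  "Qmap a z = z * (a - z) / (1 - cnj a * z)"

text \<open>The critical point c_a = a / (1 + sqrt(1 - |a|^2)) of Q_a in the unit disk.\<close>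
definition crit :: "complex \<Rightarrow> complex" where
  "crit a = a / (1 + complex_of_real (sqrt (1 - (cmod a)^2)))"

end

theory Submission
  imports Defs
begin

text \<open>
  For |s| = 1 one has 1 - conj(s) z = conj(s) (s - z), so Q_s is the rotation z \<mapsto> s z
  away from its pole z = s. As a \<rightarrow> s inside the disk, c_a tends to exactly that pole,
  but Q_a(c_a) = c_a^2 \<rightarrow> s^2 nevertheless. From there on Q_a^i(c_a) \<rightarrow> s^(i+1) by
  continuity, because s is not a root of unity and so no s^(i+1) with i \<ge> 1 is the pole.
  These finitely many limits are unimodular, which gives the bound near s.
\<close>

lemma Qmap_crit:
  assumes "cmod a < 1"
  shows "Qmap a (crit a) = (crit a)^2"
proof -
  define w where "w = sqrt (1 - (cmod a)^2)"
  define c where "c = crit a"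
  have "(cmod a)^2 < 1" using assms by (simp add: power_less_one_iff)
  then have w_pos: "w > 0" and w_sq: "w^2 = 1 - (cmod a)^2"
    unfolding w_def by simp_all
  have denom_nz: "1 + complex_of_real w \<noteq> 0"
    using w_pos by (simp add: complex_eq_iff)
  have c_eq: "c * (1 + of_real w) = a"
    using denom_nz by (simp add: c_def crit_def w_def)
  have "cnj a * a = of_real ((cmod a)^2)"
    using complex_norm_square[of a] by (simp add: mult.commute)
  also have "\<dots> = of_real (1 - w^2)"
    by (simp add: w_sq)
  finally have norm_a: "cnj a * a = 1 - of_real w ^ 2"
    by simp
  have "(1 - cnj a * c) * (1 + of_real w) = of_real w * (1 + of_real w)"
    using c_eq norm_a by (simp add: algebra_simps power2_eq_square flip: c_eq)
  then have pole_dist: "1 - cnj a * c = of_real w"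
    using denom_nz by simp
  have "a - c = c * of_real w"
    using c_eq by (simp add: algebra_simps flip: c_eq)
  then show ?thesis
    using w_pos by (simp add: Qmap_def pole_dist power2_eq_square flip: c_def)
qed

lemma isCont_crit:
  assumes "cmod a \<le> 1"
  shows "isCont crit a"
proof -
  have "sqrt (1 - (cmod a)^2) \<ge> 0"
    using assms by (simp add: power_le_one)
  then have "1 + sqrt (1 - (cmod a)^2) \<noteq> 0"
    by linarith
  then have "1 + complex_of_real (sqrt (1 - (cmod a)^2)) \<noteq> 0"
    by (metis of_real_1 of_real_add of_real_eq_0_iff)
  then show ?thesis
    unfolding crit_def[abs_def] by (intro continuous_intros) auto
qed

lemma crit_unimodular: "cmod s = 1 \<Longrightarrow> crit s = s"
  by (simp add: crit_def)

lemma cnj_mult_self_unimodular: "cmod s = 1 \<Longrightarrow> cnj s * s = 1"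
  using complex_norm_square[of s] by (simp add: mult.commute)

lemma Qmap_unimodular:
  assumes "cmod s = 1" and "z \<noteq> s"
  shows "Qmap s z = s * z"
proof -
  note unit = cnj_mult_self_unimodular[OF assms(1)]
  then have "Qmap s z = z * (s - z) / (cnj s * (s - z))"
    by (simp add: Qmap_def algebra_simps)
  also have "\<dots> = z / cnj s"
    using assms(2) by simp
  also have "\<dots> = s * z"
    using inverse_unique[OF unit] by (simp add: divide_inverse mult.commute)
  finally show ?thesis .
qed

lemma tendsto_Qmap:
  assumes "(f \<longlongrightarrow> a) F" and "(g \<longlongrightarrow> z) F" and "1 - cnj a * z \<noteq> 0"
  shows "((\<lambda>x. Qmap (f x) (g x)) \<longlongrightarrow> Qmap a z) F"
  unfolding Qmap_def using assms by (intro tendsto_intros)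

lemma tendsto_crit_unimodular:
  assumes "cmod s = 1"
  shows "(crit \<longlongrightarrow> s) (at s within S)"
  using isCont_tendsto_compose[OF isCont_crit tendsto_ident_at, of s S] crit_unimodular[OF assms]
  by (simp add: assms)

lemma tendsto_Qmap_iterates_crit:
  assumes norm_s: "cmod s = 1" and not_root: "\<And>k. k > 0 \<Longrightarrow> s ^ k \<noteq> 1"
  shows "((\<lambda>a. (Qmap a ^^ i) (crit a)) \<longlongrightarrow> s ^ (i + 1)) (at s within ball 0 1)"
proof -
  have "((\<lambda>a. (Qmap a ^^ Suc j) (crit a)) \<longlongrightarrow> s ^ (Suc j + 1)) (at s within ball 0 1)" for j
  proof (induction j)
    case 0
    have "((\<lambda>a. (crit a)^2) \<longlongrightarrow> s^2) (at s within ball 0 1)"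
      by (intro tendsto_intros tendsto_crit_unimodular norm_s)
    moreover have "\<forall>\<^sub>F a in at s within ball 0 1. (crit a)^2 = (Qmap a ^^ 1) (crit a)"
      by (simp add: eventually_at_filter Qmap_crit)
    ultimately show ?case
      by (simp add: power2_eq_square Lim_transform_eventually)
  next
    case (Suc j)
    define z where "z = s ^ (Suc j + 1)"
    have root: "s ^ Suc j \<noteq> 1"
      using not_root by blast
    have "cnj s * z = (cnj s * s) * s ^ Suc j"
      by (simp add: z_def mult_ac)
    also have "\<dots> = s ^ Suc j"
      by (simp add: cnj_mult_self_unimodular[OF norm_s])
    finally have "cnj s * z = s ^ Suc j" .
    with root have pole: "1 - cnj s * z \<noteq> 0"
      by (metis right_minus_eq)
    have "z \<noteq> s"
      using root norm_s by (auto simp: z_def)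
    have "((\<lambda>a. Qmap a ((Qmap a ^^ Suc j) (crit a))) \<longlongrightarrow> Qmap s z) (at s within ball 0 1)"
      using tendsto_Qmap[OF tendsto_ident_at Suc.IH[folded z_def] pole] .
    moreover have "Qmap s z = s ^ (Suc (Suc j) + 1)"
      using Qmap_unimodular[OF norm_s \<open>z \<noteq> s\<close>] by (simp add: z_def)
    ultimately show ?case
      by simp
  qed
  then show ?thesis
    using tendsto_crit_unimodular[OF norm_s] by (cases i) auto
qed

lemma exp_irrational_rotation:
  assumes "\<theta> \<notin> \<rat>"
  defines "s \<equiv> exp (2 * of_real pi * \<i> * of_real \<theta>)"
  shows "cmod s = 1" and "k > 0 \<Longrightarrow> s ^ k \<noteq> 1"
proof -
  show "cmod s = 1"
    by (simp add: s_def norm_exp_eq_Re)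
  assume "k > 0"
  show "s ^ k \<noteq> 1"
  proof
    assume "s ^ k = 1"
    then have "exp (of_nat k * (2 * of_real pi * \<i> * of_real \<theta>)) = 1"
      by (simp add: s_def exp_of_nat_mult)
    then obtain n :: int where "real k * \<theta> = n"
      by (auto simp: exp_eq_1)
    then have "\<theta> = of_int n / of_nat k"
      using \<open>k > 0\<close> by (simp add: field_simps)
    then show False
      using assms(1) by simp
  qed
qed

theorem lemma4p5:
  fixes \<theta> :: real and \<epsilon> :: real and m :: nat
  assumes "\<theta> \<notin> \<rat>" and "\<epsilon> > 0" and "m > 0"
  defines "s \<equiv> exp (2 * of_real pi * \<i> * of_real \<theta>)"
  shows "\<exists>\<delta>>0. \<forall>a. cmod a < 1 \<and> cmod (s - a) < \<delta> \<longrightarrow>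
           (\<forall>i\<le>m. cmod ((Qmap a ^^ i) (crit a)) > 1 - \<epsilon>)"
proof -
  note norm_s = exp_irrational_rotation(1)[OF assms(1), folded s_def]
  note not_root = exp_irrational_rotation(2)[OF assms(1), folded s_def]
  have "\<forall>\<^sub>F a in at s within ball 0 1. cmod ((Qmap a ^^ i) (crit a)) > 1 - \<epsilon>" for i
  proof (rule order_tendstoD)
    show "((\<lambda>a. cmod ((Qmap a ^^ i) (crit a))) \<longlongrightarrow> 1) (at s within ball 0 1)"
      using tendsto_norm[OF tendsto_Qmap_iterates_crit[OF norm_s not_root]]
      by (simp add: norm_mult norm_power norm_s)
  qed (use assms(2) in simp)
  then have "\<forall>\<^sub>F a in at s within ball 0 1. \<forall>i\<in>{..m}. cmod ((Qmap a ^^ i) (crit a)) > 1 - \<epsilon>"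
    by (simp add: eventually_ball_finite)
  then obtain \<delta> where "\<delta> > 0" and \<delta>: "\<And>a. a \<in> ball 0 1 \<Longrightarrow> a \<noteq> s \<Longrightarrow> dist a s < \<delta> \<Longrightarrow>
      \<forall>i\<in>{..m}. cmod ((Qmap a ^^ i) (crit a)) > 1 - \<epsilon>"
    unfolding eventually_at by blast
  have "a \<noteq> s" if "cmod a < 1" for a
    using that norm_s by auto
  with \<open>\<delta> > 0\<close> \<delta> show ?thesis
    by (auto simp: dist_norm norm_minus_commute)
qed

end
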